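(* Let $h:J\to\mathbb{R}$ be a non-negative function, where $J\subseteq\mathbb{R}$ is an interval with $[0,1]\subseteq J$, and assume $h$ is Lebesgue integrable on $[0,1]$. Let $I\subset[0,\infty)$ be an open interval, let $a,b\in I$ with $a<b$, and let $f:I\to\mathbb{R}$ be three times differentiable on $I$ with $f'''\in L_1[a,b]$. If $|f'''|$ is $h$-convex on $[a,b]$, then $$\left|\int_a^b f(x)\,dx-\frac{b-a}{6}\left[f(a)+4f\left(\frac{a+b}{2}\right)+f(b)\right]\right|\le \frac{(b-a)^4}{6}\left[\int_0^{1/2}t^2\left(\tfrac12-t\right)h(t)\,dt+\int_0^{1/2}t^2\left(\tfrac12-t\right)h(1-t)\,dt\right]\bigl[|f'''(a)|+|f'''(b)|\bigr].$$
   Context: Given a non-negative function $h$ defined on an interval containing $[0,1]$, a function $g:[a,b]\to\mathbb{R}$ is called $h$-convex on $[a,b]$ if $g$ is non-negative and for all $x,y\in[a,b]$ and $t\in[0,1]$, $$g(tx+(1-t)y)\le h(t)\,g(x)+h(1-t)\,g(y).$$ *)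

theory Defs
  imports "HOL-Analysis.Analysis"
begin

definition h_convex_on :: "(real \<Rightarrow> real) \<Rightarrow> real \<Rightarrow> real \<Rightarrow> (real \<Rightarrow> real) \<Rightarrow> bool" where
  "h_convex_on h a b g \<longleftrightarrow>
     (\<forall>x\<in>{a..b}. 0 \<le> g x) \<and>
     (\<forall>x\<in>{a..b}. \<forall>y\<in>{a..b}. \<forall>t\<in>{0..1}.
        g (t * x + (1 - t) * y) \<le> h t * g x + h (1 - t) * g y)"

end

theory Submission imports Defs begin

(* Write L = b - a, m = (a+b)/2 and k(t) = t^2 (1/2 - t).  The proof rests on the kernel
   representation of the Simpson error
     int_a^b f - L/6 (f a + 4 f m + f b)
       = L^4/6 ( int_0^(1/2) k(t) f'''(a + tL) dt - int_0^(1/2) k(t) f'''(b - tL) dt ),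
   obtained from the fundamental theorem of calculus: along any affine path c + tM the
   function  k M^2 f''(c+tM) - k' M f'(c+tM) + k'' f(c+tM) + 6 F(c+tM)/M  (F an antiderivative
   of f) has derivative k M^3 f'''(c+tM).  Since a + tL = t b + (1-t) a and
   b - tL = t a + (1-t) b, h-convexity of |f'''| bounds each half integral by a combination
   of the two weighted integrals of h and h(1 - .) in the claim; adding them gives the theorem. *)

definition simpson_kernel :: "real \<Rightarrow> real" where
  "simpson_kernel t = t\<^sup>2 * (1/2 - t)"

lemma simpson_kernel_nonneg: "t \<in> {0..1/2} \<Longrightarrow> 0 \<le> simpson_kernel t"
  unfolding simpson_kernel_def by auto

lemma DERIV_affine_path:
  fixes g :: "real \<Rightarrow> real"
  assumes "(g has_real_derivative D) (at (c + t*M) within T)"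
    and "(\<lambda>t. c + t*M) ` S \<subseteq> T"
  shows "((\<lambda>t. g (c + t*M)) has_real_derivative D * M) (at t within S)"
proof -
  have "((\<lambda>t. c + t*M) has_real_derivative M) (at t within S)"
    by (auto intro!: derivative_eq_intros)
  moreover have "(g has_real_derivative D) (at ((\<lambda>t. c + t*M) t) within ((\<lambda>t. c + t*M) ` S))"
    using DERIV_subset[OF assms] by simp
  ultimately show ?thesis using DERIV_image_chain by (simp add: o_def)
qed

text \<open>Kernel identity on one half of the interval: integrating k(t) f'''(c + tM) over
  [0,1/2] by parts three times expresses it through f', f and an antiderivative F of f.\<close>
lemma simpson_half_kernel:
  fixes F f f1 f2 f3 :: "real \<Rightarrow> real"
  assumes dF: "\<forall>x\<in>S. (F has_real_derivative f x) (at x within S)"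
    and d1: "\<forall>x\<in>S. (f has_real_derivative f1 x) (at x within S)"
    and d2: "\<forall>x\<in>S. (f1 has_real_derivative f2 x) (at x within S)"
    and d3: "\<forall>x\<in>S. (f2 has_real_derivative f3 x) (at x within S)"
    and path: "(\<lambda>t. c + t*M) ` {0..1/2} \<subseteq> S" and M: "M \<noteq> 0"
  shows "((\<lambda>t. simpson_kernel t * f3 (c + t*M)) has_integral
           (M * f1 (c + M/2) / 4 - 2 * f (c + M/2) - f c + 6 * (F (c + M/2) - F c) / M) / M^3)
         {0..1/2}"
proof -
  define k1 :: "real \<Rightarrow> real" where "k1 t = t - 3*t^2" for t
  define k2 :: "real \<Rightarrow> real" where "k2 t = 1 - 6*t" for t
  have dk: "(simpson_kernel has_real_derivative k1 t) (at t within {0..1/2})" for t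
    unfolding simpson_kernel_def k1_def
    by (auto intro!: derivative_eq_intros simp: power2_eq_square algebra_simps)
  have dk1: "(k1 has_real_derivative k2 t) (at t within {0..1/2})" for t
    unfolding k1_def k2_def by (auto intro!: derivative_eq_intros simp: power2_eq_square)
  have dk2: "(k2 has_real_derivative -6) (at t within {0..1/2})" for t
    unfolding k2_def by (auto intro!: derivative_eq_intros)
  define G where "G t = simpson_kernel t * M^2 * f2 (c + t*M) - k1 t * M * f1 (c + t*M)
      + k2 t * f (c + t*M) + 6 * F (c + t*M) / M" for t
  have dG: "(G has_real_derivative simpson_kernel t * M^3 * f3 (c + t*M)) (at t within {0..1/2})"
    if t: "t \<in> {0..1/2}" for t
  proof -
    have x: "c + t*M \<in> S" using path t by (auto simp: image_subset_iff)
    note chain = DERIV_affine_path[OF _ path]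
    have e3: "((\<lambda>t. f2 (c + t*M)) has_real_derivative f3 (c + t*M) * M) (at t within {0..1/2})"
      using chain d3 x by blast
    have e2: "((\<lambda>t. f1 (c + t*M)) has_real_derivative f2 (c + t*M) * M) (at t within {0..1/2})"
      using chain d2 x by blast
    have e1: "((\<lambda>t. f (c + t*M)) has_real_derivative f1 (c + t*M) * M) (at t within {0..1/2})"
      using chain d1 x by blast
    have e0: "((\<lambda>t. F (c + t*M)) has_real_derivative f (c + t*M) * M) (at t within {0..1/2})"
      using chain dF x by blast
    note sum = DERIV_add[OF DERIV_add[OF DERIV_diff
          [OF DERIV_mult[OF DERIV_mult[OF dk DERIV_const] e3]
              DERIV_mult[OF DERIV_mult[OF dk1 DERIV_const] e2]]
          DERIV_mult[OF dk2 e1]] DERIV_cdivide[OF DERIV_cmult[OF e0]]]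
    show ?thesis unfolding G_def
      by (rule DERIV_cong[OF sum])
        (use M in \<open>simp add: simpson_kernel_def k1_def k2_def field_simps power2_eq_square power3_eq_cube\<close>)
  qed
  have "((\<lambda>t. simpson_kernel t * M^3 * f3 (c + t*M)) has_integral (G (1/2) - G 0)) {0..1/2}"
    by (rule fundamental_theorem_of_calculus)
      (auto simp: has_real_derivative_iff_has_vector_derivative[symmetric] intro!: dG)
  from has_integral_mult_right[OF this, of "1 / M^3"]
  have "((\<lambda>t. simpson_kernel t * f3 (c + t*M)) has_integral (G (1/2) - G 0) / M^3) {0..1/2}"
    using M by simp
  moreover have "G (1/2) - G 0
      = M * f1 (c + M/2) / 4 - 2 * f (c + M/2) - f c + 6 * (F (c + M/2) - F c) / M"
    unfolding G_def simpson_kernel_def k1_def k2_def using M by (simp add: field_simps)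
  ultimately show ?thesis by simp
qed

lemma simpson_error_representation:
  fixes f f1 f2 f3 :: "real \<Rightarrow> real" and a b :: real
  assumes ab: "a < b"
    and d1: "\<forall>x\<in>{a..b}. (f has_real_derivative f1 x) (at x within {a..b})"
    and d2: "\<forall>x\<in>{a..b}. (f1 has_real_derivative f2 x) (at x within {a..b})"
    and d3: "\<forall>x\<in>{a..b}. (f2 has_real_derivative f3 x) (at x within {a..b})"
  shows "(\<lambda>t. simpson_kernel t * f3 (a + t*(b - a))) integrable_on {0..1/2}"
    and "(\<lambda>t. simpson_kernel t * f3 (b - t*(b - a))) integrable_on {0..1/2}"
    and "integral {a..b} f - (b - a) / 6 * (f a + 4 * f ((a + b) / 2) + f b)
         = (b - a)^4 / 6 * (integral {0..1/2} (\<lambda>t. simpson_kernel t * f3 (a + t*(b - a)))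
                           - integral {0..1/2} (\<lambda>t. simpson_kernel t * f3 (b - t*(b - a))))"
proof -
  define L where "L = b - a"
  have L: "L > 0" using ab by (simp add: L_def)
  have "continuous_on {a..b} f"
    using d1 DERIV_continuous continuous_on_eq_continuous_within by blast
  then have dF: "\<forall>x\<in>{a..b}. ((\<lambda>x. integral {a..x} f) has_real_derivative f x) (at x within {a..b})"
    using integral_has_real_derivative by blast
  have scaled: "0 \<le> t*L \<and> t*L \<le> L" if "t \<in> {0..1/2}" for t
    using that L by (auto simp: mult_left_le_one_le)
  have left_path: "(\<lambda>t. a + t*L) ` {0..1/2} \<subseteq> {a..b}"
    using scaled by (force simp: L_def)
  have right_path: "(\<lambda>t. b + t*(-L)) ` {0..1/2} \<subseteq> {a..b}"
  proof (rule image_subsetI)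
    fix t :: real assume "t \<in> {0..1/2}"
    then show "b + t*(-L) \<in> {a..b}" using scaled[of t] by (simp add: L_def algebra_simps)
  qed
  note half = simpson_half_kernel[OF dF d1 d2 d3]
  have mid: "a + L/2 = (a + b)/2" "b - L/2 = (a + b)/2" by (simp_all add: L_def field_simps)
  have IL: "((\<lambda>t. simpson_kernel t * f3 (a + t*L)) has_integral
      (L * f1 ((a+b)/2) / 4 - 2 * f ((a+b)/2) - f a + 6 * integral {a..(a+b)/2} f / L) / L^3) {0..1/2}"
    using half[OF left_path] L by (simp add: mid)
  have IR: "((\<lambda>t. simpson_kernel t * f3 (b - t*L)) has_integral
      (-L * f1 ((a+b)/2) / 4 - 2 * f ((a+b)/2) - f b
        + 6 * (integral {a..(a+b)/2} f - integral {a..b} f) / -L) / (-L)^3) {0..1/2}"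
    using half[OF right_path] L by (simp add: mid)
  show "(\<lambda>t. simpson_kernel t * f3 (a + t*(b - a))) integrable_on {0..1/2}"
    using IL by (auto simp: L_def)
  show "(\<lambda>t. simpson_kernel t * f3 (b - t*(b - a))) integrable_on {0..1/2}"
    using IR by (auto simp: L_def)
  show "integral {a..b} f - (b - a) / 6 * (f a + 4 * f ((a + b) / 2) + f b)
      = (b - a)^4 / 6 * (integral {0..1/2} (\<lambda>t. simpson_kernel t * f3 (a + t*(b - a)))
                        - integral {0..1/2} (\<lambda>t. simpson_kernel t * f3 (b - t*(b - a))))"
    unfolding L_def[symmetric] integral_unique[OF IL] integral_unique[OF IR]
    using L by (simp add: field_simps power3_eq_cube power4_eq_xxxx)
qed

lemma h_convex_weighted_bound:
  fixes h g u w :: "real \<Rightarrow> real"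
  assumes hconv: "h_convex_on h a b g"
    and xy: "x \<in> {a..b}" "y \<in> {a..b}" and S: "S \<subseteq> {0..1}"
    and w_nonneg: "\<forall>t\<in>S. 0 \<le> w t"
    and u_dom: "\<forall>t\<in>S. \<bar>u t\<bar> \<le> g (t * x + (1 - t) * y)"
    and wu_int: "(\<lambda>t. w t * u t) integrable_on S"
    and wh_int: "(\<lambda>t. w t * h t) integrable_on S"
    and wh1_int: "(\<lambda>t. w t * h (1 - t)) integrable_on S"
  shows "\<bar>integral S (\<lambda>t. w t * u t)\<bar>
         \<le> g x * integral S (\<lambda>t. w t * h t) + g y * integral S (\<lambda>t. w t * h (1 - t))"
proof -
  have bound_int: "(\<lambda>t. g x * (w t * h t) + g y * (w t * h (1 - t))) integrable_on S"
    by (intro integrable_add integrable_on_mult_right wh_int wh1_int)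
  have "norm (integral S (\<lambda>t. w t * u t))
        \<le> integral S (\<lambda>t. g x * (w t * h t) + g y * (w t * h (1 - t)))"
  proof (rule integral_norm_bound_integral[OF wu_int bound_int])
    fix t assume t: "t \<in> S"
    have "\<bar>u t\<bar> \<le> h t * g x + h (1 - t) * g y"
      using u_dom hconv xy S t unfolding h_convex_on_def by (meson order_trans subsetD)
    then have "w t * \<bar>u t\<bar> \<le> w t * (h t * g x + h (1 - t) * g y)"
      using w_nonneg t by (simp add: mult_left_mono)
    then show "norm (w t * u t) \<le> g x * (w t * h t) + g y * (w t * h (1 - t))"
      using w_nonneg t by (simp add: abs_mult algebra_simps)
  qed
  also have "\<dots> = g x * integral S (\<lambda>t. w t * h t) + g y * integral S (\<lambda>t. w t * h (1 - t))"
    using wh_int wh1_int by (simp add: integral_add integrable_on_mult_right)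
  finally show ?thesis by simp
qed

lemma integrable_reflect_unit_interval:
  fixes h :: "real \<Rightarrow> real"
  assumes "h integrable_on {0..1}"
  shows "(\<lambda>t. h (1 - t)) integrable_on {0..1}"
proof -
  have "(\<lambda>x. h ((-1) *\<^sub>R x + 1)) integrable_on
          ((\<lambda>x. (1 / -1) *\<^sub>R x + -((1 / -1) *\<^sub>R 1)) ` cbox 0 1)"
    using integrable_affinity[of h 0 1 "-1" 1] assms by simp
  moreover have "(\<lambda>x. (1 / -1) *\<^sub>R x + -((1 / -1) *\<^sub>R 1)) ` cbox 0 (1::real) = {0..1}"
    by (auto intro!: image_eqI[where x="1 - _"])
  ultimately show ?thesis by simp
qed

lemma simpson_kernel_weight_integrable:
  fixes g :: "real \<Rightarrow> real"
  assumes "g absolutely_integrable_on {0..1}"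
  shows "(\<lambda>t. simpson_kernel t * g t) integrable_on {0..1/2}"
proof -
  have g_half: "g absolutely_integrable_on {0..1/2}"
    by (rule absolutely_integrable_on_subinterval[OF assms]) auto
  have "(\<lambda>t. simpson_kernel t * g t) absolutely_integrable_on {0..1/2}"
  proof (rule absolutely_integrable_bounded_measurable_product_real[OF _ _ _ g_half])
    show "simpson_kernel \<in> borel_measurable (lebesgue_on {0..1/2})"
      unfolding simpson_kernel_def
      by (rule continuous_imp_measurable_on_sets_lebesgue) (auto intro!: continuous_intros)
    show "{0..1/2::real} \<in> sets lebesgue" by simp
    show "bounded (simpson_kernel ` {0..1/2})"
      unfolding simpson_kernel_def
      by (intro compact_imp_bounded compact_continuous_image) (auto intro!: continuous_intros)
  qed
  then show ?thesis using absolutely_integrable_on_def by blast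
qed

theorem theorem1:
  fixes h :: "real \<Rightarrow> real" and J :: "real set"
    and f f1 f2 f3 :: "real \<Rightarrow> real" and I :: "real set" and a b :: real
  assumes J_int: "is_interval J" and J_sub: "{0..1} \<subseteq> J"
    and h_nonneg: "\<forall>t\<in>J. 0 \<le> h t"
    and h_int: "h absolutely_integrable_on {0..1}"
    and I_open: "open I" and I_int: "is_interval I" and I_pos: "I \<subseteq> {0..}"
    and ab: "a \<in> I" "b \<in> I" "a < b"
    and d1: "\<forall>x\<in>I. (f has_real_derivative f1 x) (at x)"
    and d2: "\<forall>x\<in>I. (f1 has_real_derivative f2 x) (at x)"
    and d3: "\<forall>x\<in>I. (f2 has_real_derivative f3 x) (at x)"
    and f3_L1: "f3 absolutely_integrable_on {a..b}"
    and hconv: "h_convex_on h a b (\<lambda>x. \<bar>f3 x\<bar>)"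
  shows "\<bar>integral {a..b} f - (b - a) / 6 * (f a + 4 * f ((a + b) / 2) + f b)\<bar>
    \<le> (b - a) ^ 4 / 6 *
       (integral {0..1/2} (\<lambda>t. t\<^sup>2 * (1/2 - t) * h t)
        + integral {0..1/2} (\<lambda>t. t\<^sup>2 * (1/2 - t) * h (1 - t)))
       * (\<bar>f3 a\<bar> + \<bar>f3 b\<bar>)"
proof -
  have "{a..b} \<subseteq> I"
    using mem_is_interval_1_I[OF I_int ab(1,2)] by auto
  then have "\<forall>x\<in>{a..b}. (f has_real_derivative f1 x) (at x within {a..b})"
    "\<forall>x\<in>{a..b}. (f1 has_real_derivative f2 x) (at x within {a..b})"
    "\<forall>x\<in>{a..b}. (f2 has_real_derivative f3 x) (at x within {a..b})"
    using d1 d2 d3 has_field_derivative_at_within by blast+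
  note rep = simpson_error_representation[OF ab(3) this]
  define IL where "IL = integral {0..1/2} (\<lambda>t. simpson_kernel t * f3 (a + t*(b - a)))"
  define IR where "IR = integral {0..1/2} (\<lambda>t. simpson_kernel t * f3 (b - t*(b - a)))"
  define Ih where "Ih = integral {0..1/2} (\<lambda>t. simpson_kernel t * h t)"
  define Ih' where "Ih' = integral {0..1/2} (\<lambda>t. simpson_kernel t * h (1 - t))"
  have "(\<lambda>t. h (1 - t)) absolutely_integrable_on {0..1}"
    using integrable_reflect_unit_interval[of h] h_int h_nonneg J_sub
    by (intro nonnegative_absolutely_integrable_1) (auto simp: absolutely_integrable_on_def subset_iff)
  note weights = simpson_kernel_weight_integrable[OF h_int] simpson_kernel_weight_integrable[OF this]
  have ends: "a \<in> {a..b}" "b \<in> {a..b}" and half: "{0..1/2} \<subseteq> {0..1::real}"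
    using ab by auto
  have "\<bar>IL\<bar> \<le> \<bar>f3 b\<bar> * Ih + \<bar>f3 a\<bar> * Ih'"
    unfolding IL_def Ih_def Ih'_def
    by (rule h_convex_weighted_bound[OF hconv ends(2,1) half _ _ rep(1) weights])
      (auto simp: simpson_kernel_nonneg algebra_simps)
  moreover have "\<bar>IR\<bar> \<le> \<bar>f3 a\<bar> * Ih + \<bar>f3 b\<bar> * Ih'"
    unfolding IR_def Ih_def Ih'_def
    by (rule h_convex_weighted_bound[OF hconv ends half _ _ rep(2) weights])
      (auto simp: simpson_kernel_nonneg algebra_simps)
  ultimately have kernel_bound: "\<bar>IL - IR\<bar> \<le> (Ih + Ih') * (\<bar>f3 a\<bar> + \<bar>f3 b\<bar>)"
    using abs_triangle_ineq4[of IL IR] by (simp add: algebra_simps)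
  have "\<bar>integral {a..b} f - (b - a) / 6 * (f a + 4 * f ((a + b) / 2) + f b)\<bar>
        = (b - a)^4 / 6 * \<bar>IL - IR\<bar>"
    unfolding rep(3) IL_def[symmetric] IR_def[symmetric] using ab(3) by (simp add: abs_mult)
  also have "\<dots> \<le> (b - a)^4 / 6 * ((Ih + Ih') * (\<bar>f3 a\<bar> + \<bar>f3 b\<bar>))"
    using kernel_bound by (rule mult_left_mono) simp
  finally show ?thesis
    unfolding Ih_def Ih'_def simpson_kernel_def by (simp only: mult.assoc)
qed

end
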